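(* Assume $r\ge2$, let $F:(\mathbb{R}^n,D)\to(\mathbb{R}^n,D)$ be an $\eta$-quasisymmetric homeomorphism, and write $F(x,y)=(H(x,y),G(y))$ for $x\in\mathbb{R}^{n_1}$, $y\in Y$ (such maps exist since $F$ maps each horizontal leaf $\mathbb{R}^{n_1}\times\{y\}$ onto a horizontal leaf). Suppose there are constants $K\ge1$ and $C>0$ such that (1) $G:(Y,D_Y)\to(Y,D_Y)$ is a $K$-quasisimilarity with constant $C$, and (2) for each $y\in Y$, $H(\cdot,y):\mathbb{R}^{n_1}\to\mathbb{R}^{n_1}$ (Euclidean metric) is a $K$-quasisimilarity with constant $C$. Then $F$ is an $(\eta(1)/\eta^{-1}(1))K$-quasisimilarity (with respect to $D$) with constant $C$.
   Context: Let $n_1,\dots,n_r\ge1$, $n=n_1+\dots+n_r$, $0<\alpha_1<\dots<\alpha_r$. For $x=(x_1,\dots,x_r)\in\mathbb{R}^n=\mathbb{R}^{n_1}\times\dots\times\mathbb{R}^{n_r}$, $D(x,y)=\max\{|x_1-y_1|,|x_2-y_2|^{\alpha_1/\alpha_2},\dots,|x_r-y_r|^{\alpha_1/\alpha_r}\}$. $Y=\mathbb{R}^{n_2}\times\dots\times\mathbb{R}^{n_r}$, $\mathbb{R}^n=\mathbb{R}^{n_1}\times Y$, $D_Y((x_2,\dots,x_r),(x_2',\dots,x_r'))=\max_{2\le i\le r}|x_i-x_i'|^{\alpha_1/\alpha_i}$. $\eta:[0,\infty)\to[0,\infty)$ is a homeomorphism; $f$ is $\eta$-quasisymmetric if $\frac{d(f(x),f(y))}{d(f(x),f(z))}\le\eta(\frac{d(x,y)}{d(x,z)})$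 for distinct $x,y,z$. A bijection $\Phi$ is a $K$-quasisimilarity with constant $C>0$ if $\frac CK d(a,b)\le d(\Phi(a),\Phi(b))\le CK\,d(a,b)$ for all $a,b$. *)

theory Defs
  imports "HOL-Analysis.Analysis"
begin

text \<open>Points of R^n = R^{n_1} x ... x R^{n_r} are encoded as functions
  x :: nat => nat => real, where x i j is the j-th coordinate (j < n i) of the
  i-th block (1 <= i <= r); all other values are 0.  Points of R^{n_1} are
  nat => real with support in {..< n 1}.\<close>

type_synonym pt = "nat \<Rightarrow> nat \<Rightarrow> real"

definition Rn :: "nat \<Rightarrow> (nat \<Rightarrow> nat) \<Rightarrow> pt set" where
  "Rn r n = {x. \<forall>i j. (i \<notin> {1..r} \<or> n i \<le> j) \<longrightarrow> x i j = 0}"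

definition Yspace :: "nat \<Rightarrow> (nat \<Rightarrow> nat) \<Rightarrow> pt set" where
  "Yspace r n = {y. \<forall>i j. (i \<notin> {2..r} \<or> n i \<le> j) \<longrightarrow> y i j = 0}"

definition R1 :: "(nat \<Rightarrow> nat) \<Rightarrow> (nat \<Rightarrow> real) set" where
  "R1 n = {a. \<forall>j. n 1 \<le> j \<longrightarrow> a j = 0}"

definition blockdist :: "(nat \<Rightarrow> nat) \<Rightarrow> pt \<Rightarrow> pt \<Rightarrow> nat \<Rightarrow> real" where
  "blockdist n x y i = sqrt (\<Sum>j<n i. (x i j - y i j)^2)"

definition eucl1 :: "(nat \<Rightarrow> nat) \<Rightarrow> (nat \<Rightarrow> real) \<Rightarrow> (nat \<Rightarrow> real) \<Rightarrow> real" where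
  "eucl1 n a b = sqrt (\<Sum>j<n 1. (a j - b j)^2)"

definition Dmet :: "nat \<Rightarrow> (nat \<Rightarrow> nat) \<Rightarrow> (nat \<Rightarrow> real) \<Rightarrow> pt \<Rightarrow> pt \<Rightarrow> real" where
  "Dmet r n \<alpha> x y = Max ((\<lambda>i. blockdist n x y i powr (\<alpha> 1 / \<alpha> i)) ` {1..r})"

definition DY :: "nat \<Rightarrow> (nat \<Rightarrow> nat) \<Rightarrow> (nat \<Rightarrow> real) \<Rightarrow> pt \<Rightarrow> pt \<Rightarrow> real" where
  "DY r n \<alpha> x y = Max ((\<lambda>i. blockdist n x y i powr (\<alpha> 1 / \<alpha> i)) ` {2..r})"

definition ypart :: "pt \<Rightarrow> pt" where
  "ypart x = x(1 := (\<lambda>_. 0))"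

definition combine :: "(nat \<Rightarrow> real) \<Rightarrow> pt \<Rightarrow> pt" where
  "combine a y = y(1 := a)"

definition quasisymmetric ::
  "'a set \<Rightarrow> ('a \<Rightarrow> 'a \<Rightarrow> real) \<Rightarrow> (real \<Rightarrow> real) \<Rightarrow> ('a \<Rightarrow> 'a) \<Rightarrow> bool" where
  "quasisymmetric S d \<eta> f \<longleftrightarrow>
     (\<forall>x\<in>S. \<forall>y\<in>S. \<forall>z\<in>S. x \<noteq> y \<and> x \<noteq> z \<and> y \<noteq> z \<longrightarrow>
        d (f x) (f y) / d (f x) (f z) \<le> \<eta> (d x y / d x z))"

definition metric_continuous_on :: "'a set \<Rightarrow> ('a \<Rightarrow> 'a \<Rightarrow> real) \<Rightarrow> ('a \<Rightarrow> 'a) \<Rightarrow> bool" where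
  "metric_continuous_on S d f \<longleftrightarrow>
     (\<forall>x\<in>S. \<forall>e>0. \<exists>\<delta>>0. \<forall>y\<in>S. d x y < \<delta> \<longrightarrow> d (f x) (f y) < e)"

definition metric_homeomorphism :: "'a set \<Rightarrow> ('a \<Rightarrow> 'a \<Rightarrow> real) \<Rightarrow> ('a \<Rightarrow> 'a) \<Rightarrow> bool" where
  "metric_homeomorphism S d f \<longleftrightarrow> bij_betw f S S \<and> metric_continuous_on S d f
     \<and> metric_continuous_on S d (inv_into S f)"

definition quasisimilarity ::
  "'a set \<Rightarrow> ('a \<Rightarrow> 'a \<Rightarrow> real) \<Rightarrow> real \<Rightarrow> real \<Rightarrow> ('a \<Rightarrow> 'a) \<Rightarrow> bool" where
  "quasisimilarity S d K C f \<longleftrightarrow> bij_betw f S S \<and>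
     (\<forall>a\<in>S. \<forall>b\<in>S. C / K * d a b \<le> d (f a) (f b) \<and> d (f a) (f b) \<le> C * K * d a b)"

end

theory Submission
  imports Defs
begin

text \<open>Shifting a point p by t along the first coordinate axis of \<open>R^{n_1}\<close> keeps its
  Y-component, and since F preserves horizontal leaves so do the images; hence both
  \<open>D(p, p')\<close> and \<open>D(F p, F p')\<close> are Euclidean distances in \<open>R^{n_1}\<close>, and the latter
  lies between \<open>C |t| / K\<close> and \<open>C K |t|\<close> by the hypothesis on H.  Given a and b at
  distance d, one of the two shifts s of a by \<open>\<plusminus>d\<close> differs from b, and quasisymmetry
  applied to the equidistant triples (a, b, s) and (a, s, b) puts \<open>D(F a, F b)\<close> within
  a factor \<open>\<eta>(1)\<close> of \<open>D(F a, F s)\<close>.  So F is even an \<open>\<eta>(1) K\<close>-quasisimilarity; the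
  stated constant is weaker because the same triple argument gives \<open>\<eta>(1) \<ge> 1\<close>, whence
  \<open>0 < \<eta>\<^sup>-\<^sup>1(1) \<le> 1\<close> for the increasing homeomorphism \<open>\<eta>\<close>.\<close>

lemma blockdist_eq_0_coord:
  assumes "blockdist n p q i = 0" "j < n i"
  shows "p i j = q i j"
proof -
  have "(\<Sum>k<n i. (p i k - q i k)^2) = 0"
    using assms(1) by (simp add: blockdist_def)
  then have "\<forall>k<n i. (p i k - q i k)^2 = 0"
    by (subst (asm) sum_nonneg_eq_0_iff) auto
  then show ?thesis using assms(2) by simp
qed

lemma blockdist_powr_le_Dmet:
  assumes "i \<in> {1..r}"
  shows "blockdist n p q i powr (\<alpha> 1 / \<alpha> i) \<le> Dmet r n \<alpha> p q"
  unfolding Dmet_def using assms by (intro Max_ge) auto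

lemma Dmet_nonneg:
  assumes "1 \<le> r"
  shows "0 \<le> Dmet r n \<alpha> p q"
proof -
  have "blockdist n p q 1 powr (\<alpha> 1 / \<alpha> 1) \<le> Dmet r n \<alpha> p q"
    using assms by (intro blockdist_powr_le_Dmet) simp
  then show ?thesis by (meson order_trans powr_ge_zero)
qed

lemma Dmet_eq_0_imp_eq:
  assumes "p \<in> Rn r n" "q \<in> Rn r n" "Dmet r n \<alpha> p q = 0"
  shows "p = q"
proof (intro ext)
  fix i j
  show "p i j = q i j"
  proof (cases "i \<in> {1..r} \<and> j < n i")
    case True
    then have "blockdist n p q i powr (\<alpha> 1 / \<alpha> i) = 0"
      using blockdist_powr_le_Dmet[of i r n p q \<alpha>] assms(3) powr_ge_zero[of "blockdist n p q i"]
      by (simp add: order_antisym)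
    then show ?thesis using True blockdist_eq_0_coord by simp
  next
    case False
    then show ?thesis using assms(1,2) by (auto simp: Rn_def not_less)
  qed
qed

lemma Dmet_pos:
  assumes "1 \<le> r" "p \<in> Rn r n" "q \<in> Rn r n" "p \<noteq> q"
  shows "0 < Dmet r n \<alpha> p q"
  using Dmet_nonneg[OF assms(1), of n \<alpha> p q] Dmet_eq_0_imp_eq[OF assms(2,3)] assms(4)
  by fastforce

lemma Dmet_split:
  assumes "2 \<le> r" "0 < \<alpha> 1"
  shows "Dmet r n \<alpha> p q = max (eucl1 n (p 1) (q 1)) (DY r n \<alpha> p q)"
proof -
  have split: "{1..r} = insert 1 {2..r}" using assms by auto
  have "blockdist n p q 1 powr (\<alpha> 1 / \<alpha> 1) = eucl1 n (p 1) (q 1)"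
    using assms by (simp add: blockdist_def eucl1_def sum_nonneg)
  then show ?thesis
    unfolding Dmet_def DY_def split image_insert using assms by (subst Max_insert) auto
qed

lemma DY_cong:
  assumes "\<And>i. 2 \<le> i \<Longrightarrow> p i = p' i" "\<And>i. 2 \<le> i \<Longrightarrow> q i = q' i"
  shows "DY r n \<alpha> p q = DY r n \<alpha> p' q'"
  unfolding DY_def blockdist_def using assms
  by (intro arg_cong[where f=Max] image_cong) auto

lemma DY_self:
  assumes "2 \<le> r"
  shows "DY r n \<alpha> p p = 0"
proof -
  have "(\<lambda>i. blockdist n p p i powr (\<alpha> 1 / \<alpha> i)) ` {2..r} = {0}"
    using assms by (auto simp: blockdist_def)
  then show ?thesis by (simp add: DY_def)
qed

lemma Dmet_same_ypart:
  assumes "2 \<le> r" "0 < \<alpha> 1" "\<And>i. 2 \<le> i \<Longrightarrow> p i = q i"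
  shows "Dmet r n \<alpha> p q = eucl1 n (p 1) (q 1)"
proof -
  have "DY r n \<alpha> p q = DY r n \<alpha> p p" by (rule DY_cong) (auto simp: assms(3))
  then show ?thesis
    using Dmet_split[where r=r and \<alpha>=\<alpha> and n=n and p=p and q=q, OF assms(1,2)]
      DY_self[OF assms(1)]
    by (simp add: eucl1_def sum_nonneg)
qed

lemma Dmet_self: "2 \<le> r \<Longrightarrow> 0 < \<alpha> 1 \<Longrightarrow> Dmet r n \<alpha> p p = 0"
  using Dmet_same_ypart[where r=r and \<alpha>=\<alpha>] by (simp add: eucl1_def)

lemma eucl1_shift_first:
  assumes "1 \<le> n 1"
  shows "eucl1 n a (a(0 := a 0 + t)) = \<bar>t\<bar>"
proof -
  have "(\<Sum>j<n 1. (a j - (a(0 := a 0 + t)) j)^2) = (\<Sum>j<n 1. if j = 0 then t^2 else 0)"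
    by (intro sum.cong) auto
  also have "\<dots> = t^2" using assms by simp
  finally show ?thesis by (simp add: eucl1_def)
qed

definition hshift :: "pt \<Rightarrow> real \<Rightarrow> pt" where
  "hshift p t = p(1 := (p 1)(0 := p 1 0 + t))"

lemma hshift_0 [simp]: "hshift p 0 = p"
  by (simp add: hshift_def)

lemma hshift_eq_iff [simp]: "hshift p s = hshift p t \<longleftrightarrow> s = t"
  by (auto simp: hshift_def fun_eq_iff)

lemma hshift_in_Rn: "1 \<le> r \<Longrightarrow> 1 \<le> n 1 \<Longrightarrow> p \<in> Rn r n \<Longrightarrow> hshift p t \<in> Rn r n"
  by (auto simp: Rn_def hshift_def)

lemma Dmet_hshift:
  assumes "2 \<le> r" "0 < \<alpha> 1" "1 \<le> n 1"
  shows "Dmet r n \<alpha> p (hshift p t) = \<bar>t\<bar>"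
  using Dmet_same_ypart[where r=r and \<alpha>=\<alpha>, OF assms(1,2)]
    eucl1_shift_first[where n=n, OF assms(3)]
  by (simp add: hshift_def)

lemma Dmet_image_hshift:
  assumes "2 \<le> r" "0 < \<alpha> 1" "1 \<le> n 1"
    and Fform: "\<forall>a\<in>R1 n. \<forall>y\<in>Yspace r n. F (combine a y) = combine (H a y) (G y)"
    and Hqs: "\<forall>y\<in>Yspace r n. quasisimilarity (R1 n) (eucl1 n) K C (\<lambda>a. H a y)"
    and "p \<in> Rn r n"
  shows "C / K * \<bar>t\<bar> \<le> Dmet r n \<alpha> (F p) (F (hshift p t))
    \<and> Dmet r n \<alpha> (F p) (F (hshift p t)) \<le> C * K * \<bar>t\<bar>"
proof -
  define a y where "a = p 1" and "y = ypart p"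
  define a' where "a' = a(0 := a 0 + t)"
  have a: "a \<in> R1 n" and a': "a' \<in> R1 n" and y: "y \<in> Yspace r n"
    using assms(3,6) by (auto simp: a_def a'_def y_def Rn_def R1_def Yspace_def ypart_def)
  have "p = combine a y" "hshift p t = combine a' y"
    by (auto simp: a_def a'_def y_def combine_def ypart_def hshift_def)
  then have "Dmet r n \<alpha> (F p) (F (hshift p t)) = eucl1 n (H a y) (H a' y)"
    using Fform a a' y Dmet_same_ypart[where r=r and \<alpha>=\<alpha>, OF assms(1,2)]
    by (simp add: combine_def)
  moreover have "eucl1 n a a' = \<bar>t\<bar>"
    using eucl1_shift_first[where n=n, OF assms(3)] by (simp add: a'_def)
  ultimately show ?thesis
    using Hqs a a' y unfolding quasisimilarity_def by metis
qed

lemma quasisymmetric_equidistant: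
  assumes "quasisymmetric S d \<eta> f" "x \<in> S" "y \<in> S" "z \<in> S" "x \<noteq> y" "x \<noteq> z" "y \<noteq> z"
    and "d x y = d x z" "0 < d x z" "0 < d (f x) (f z)"
  shows "d (f x) (f y) \<le> \<eta> 1 * d (f x) (f z)"
proof -
  have "d (f x) (f y) / d (f x) (f z) \<le> \<eta> (d x y / d x z)"
    using assms(1-7) unfolding quasisymmetric_def by blast
  then show ?thesis using assms(8-10) by (simp add: divide_le_eq)
qed

lemma quasisymmetric_eta_one_ge_one:
  assumes "quasisymmetric S d \<eta> f" "x \<in> S" "y \<in> S" "z \<in> S" "x \<noteq> y" "x \<noteq> z" "y \<noteq> z"
    and "d x y = d x z" "0 < d x z" "0 < d (f x) (f y)" "0 < d (f x) (f z)"
  shows "1 \<le> \<eta> 1"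
proof -
  define A B where "A = d (f x) (f y)" and "B = d (f x) (f z)"
  have AB: "A \<le> \<eta> 1 * B" and BA: "B \<le> \<eta> 1 * A"
    using quasisymmetric_equidistant[OF assms(1-9,11)]
      quasisymmetric_equidistant[OF assms(1,2,4,3,6,5) assms(7)[symmetric]] assms(8-10)
    by (simp_all add: A_def B_def)
  have "0 < A" "0 < B" using assms(10,11) by (simp_all add: A_def B_def)
  then have "0 < \<eta> 1" using AB by (smt (verit) mult_nonpos_nonneg)
  then have "A \<le> (\<eta> 1 * \<eta> 1) * A"
    using AB BA by (smt (verit) mult.assoc mult_left_mono)
  then have "1 \<le> \<eta> 1 * \<eta> 1" using \<open>0 < A\<close> by simp
  then show ?thesis using \<open>0 < \<eta> 1\<close> by (smt (verit) mult_le_cancel_left1)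
qed

lemma homeomorphism_nonneg_strict_mono:
  fixes \<eta> \<eta>inv :: "real \<Rightarrow> real"
  assumes "homeomorphism {0..} {0..} \<eta> \<eta>inv"
  shows "strict_mono_on {0..} \<eta>"
proof -
  have im: "\<eta> ` {0..} = {0..}" and inj: "inj_on \<eta> {0..}" and cont: "continuous_on {0..} \<eta>"
    using assms unfolding homeomorphism_def by (auto intro: inj_on_inverseI)
  have "\<not> strict_antimono_on {0..} \<eta>"
  proof
    assume anti: "strict_antimono_on {0..} \<eta>"
    obtain z where z: "0 \<le> z" "\<eta> z = \<eta> 0 + 1"
      using im by (metis atLeast_iff imageE add_nonneg_nonneg image_eqI order_refl zero_le_one)
    then have "0 < z" by (cases "z = 0") auto
    then have "\<eta> z < \<eta> 0"
      using anti unfolding monotone_on_def by (simp add: less_imp_le)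
    then show False using z by simp
  qed
  then show ?thesis
    using injective_eq_monotone_map[of "{0..}" \<eta>] inj cont is_interval_ci by blast
qed

lemma homeomorphism_inv_one_bounds:
  fixes \<eta> \<eta>inv :: "real \<Rightarrow> real"
  assumes "homeomorphism {0..} {0..} \<eta> \<eta>inv" "1 \<le> \<eta> 1"
  shows "0 < \<eta>inv 1" "\<eta>inv 1 \<le> 1"
proof -
  have mono: "strict_mono_on {0..} \<eta>" by (rule homeomorphism_nonneg_strict_mono[OF assms(1)])
  have u: "0 \<le> \<eta>inv 1" "\<eta> (\<eta>inv 1) = 1"
    using assms(1) unfolding homeomorphism_def by auto
  obtain z where z: "0 \<le> z" "\<eta> z = 0"
    using assms(1) unfolding homeomorphism_def by (metis atLeast_iff imageE order_refl)
  have "\<eta> 0 \<le> \<eta> z" using mono z by (cases "z = 0") (auto dest: strict_mono_onD)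
  then have "\<eta> 0 \<noteq> 1" using z by simp
  then show "0 < \<eta>inv 1" using u by (metis order_le_less)
  show "\<eta>inv 1 \<le> 1"
    using mono u assms(2) by (smt (verit) atLeast_iff strict_mono_onD)
qed

lemma quasisimilarity_mono:
  assumes "quasisimilarity S d K C f" "0 < K" "K \<le> K'" "0 \<le> C"
    and "\<forall>a\<in>S. \<forall>b\<in>S. 0 \<le> d a b"
  shows "quasisimilarity S d K' C f"
  unfolding quasisimilarity_def
proof (intro conjI ballI)
  show "bij_betw f S S" using assms(1) by (simp add: quasisimilarity_def)
  fix a b assume ab: "a \<in> S" "b \<in> S"
  have "C / K' * d a b \<le> C / K * d a b"
    using assms(2-5) ab by (intro mult_right_mono divide_left_mono) auto
  moreover have "C * K * d a b \<le> C * K' * d a b"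
    using assms(3-5) ab by (intro mult_right_mono mult_left_mono) auto
  ultimately show "C / K' * d a b \<le> d (f a) (f b)" "d (f a) (f b) \<le> C * K' * d a b"
    using assms(1) ab unfolding quasisimilarity_def by (meson order_trans)+
qed

lemma quasisymmetric_Dmet_eta_one_ge_one:
  assumes "2 \<le> r" "0 < \<alpha> 1" "1 \<le> n 1" "bij_betw F (Rn r n) (Rn r n)"
    and "quasisymmetric (Rn r n) (Dmet r n \<alpha>) \<eta> F"
  shows "1 \<le> \<eta> 1"
proof -
  define p :: pt where "p = (\<lambda>_ _. 0)"
  have "p \<in> Rn r n" by (simp add: p_def Rn_def)
  then have inR: "p \<in> Rn r n" "hshift p 1 \<in> Rn r n" "hshift p (-1) \<in> Rn r n"
    using hshift_in_Rn assms(1,3) by auto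
  have ne: "p \<noteq> hshift p 1" "p \<noteq> hshift p (-1)" "hshift p 1 \<noteq> hshift p (-1)"
    using hshift_eq_iff[of p 0] by auto
  have "0 < Dmet r n \<alpha> (F a) (F b)" if "a \<in> Rn r n" "b \<in> Rn r n" "a \<noteq> b" for a b
    using that assms(1,4) by (intro Dmet_pos) (auto simp: bij_betw_def inj_on_def)
  then show ?thesis
    using quasisymmetric_eta_one_ge_one[OF assms(5) inR ne]
      Dmet_hshift[where r=r and \<alpha>=\<alpha> and n=n, OF assms(1-3)] inR ne by simp
qed

lemma quasisimilarity_Dmet_of_horizontal:
  assumes "2 \<le> r" "0 < \<alpha> 1" "1 \<le> n 1"
    and bij: "bij_betw F (Rn r n) (Rn r n)"
    and Fqs: "quasisymmetric (Rn r n) (Dmet r n \<alpha>) \<eta> F"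
    and Fform: "\<forall>a\<in>R1 n. \<forall>y\<in>Yspace r n. F (combine a y) = combine (H a y) (G y)"
    and Hqs: "\<forall>y\<in>Yspace r n. quasisimilarity (R1 n) (eucl1 n) K C (\<lambda>a. H a y)"
    and "0 < \<eta> 1" "0 < K"
  shows "quasisimilarity (Rn r n) (Dmet r n \<alpha>) (\<eta> 1 * K) C F"
  unfolding quasisimilarity_def
proof (intro conjI[OF bij] ballI)
  let ?D = "Dmet r n \<alpha>"
  fix a b assume a: "a \<in> Rn r n" and b: "b \<in> Rn r n"
  have Fpos: "0 < ?D (F p) (F q)" if "p \<in> Rn r n" "q \<in> Rn r n" "p \<noteq> q" for p q
    using that assms(1) bij by (intro Dmet_pos) (auto simp: bij_betw_def inj_on_def)
  show "C / (\<eta> 1 * K) * ?D a b \<le> ?D (F a) (F b) \<and> ?D (F a) (F b) \<le> C * (\<eta> 1 * K) * ?D a b"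
  proof (cases "a = b")
    case True
    then show ?thesis using Dmet_self[where r=r and \<alpha>=\<alpha>, OF assms(1,2)] by simp
  next
    case False
    define d where "d = ?D a b"
    have "0 < d" using Dmet_pos[OF _ a b False] assms(1) by (simp add: d_def)
    obtain t where t: "\<bar>t\<bar> = d" "hshift a t \<noteq> b"
    proof (cases "hshift a d = b")
      case True
      then have "hshift a (-d) \<noteq> b" using hshift_eq_iff[of a "-d" d] \<open>0 < d\<close> by auto
      then show ?thesis using that[of "-d"] \<open>0 < d\<close> by simp
    next
      case False
      then show ?thesis using that[of d] \<open>0 < d\<close> by simp
    qed
    define s where "s = hshift a t"
    have s: "s \<in> Rn r n" "?D a s = d" "a \<noteq> s"
      using hshift_in_Rn[OF _ assms(3) a] Dmet_hshift[where r=r and \<alpha>=\<alpha> and n=n, OF assms(1-3)]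
        hshift_eq_iff[of a 0 t] t \<open>0 < d\<close> assms(1) by (auto simp: s_def)
    define A B where "A = ?D (F a) (F b)" and "B = ?D (F a) (F s)"
    have AB: "A \<le> \<eta> 1 * B" and BA: "B \<le> \<eta> 1 * A"
      using quasisymmetric_equidistant[OF Fqs a b s(1) False s(3)]
        quasisymmetric_equidistant[OF Fqs a s(1) b s(3) False] t(2) s(2) \<open>0 < d\<close>
        Fpos[OF a b False] Fpos[OF a s(1,3)]
      by (auto simp: A_def B_def d_def s_def)
    have B: "C / K * d \<le> B" "B \<le> C * K * d"
      using Dmet_image_hshift[where \<alpha>=\<alpha>, OF assms(1-3) Fform Hqs a, of t] t(1)
      by (simp_all add: B_def s_def)
    have "C / (\<eta> 1 * K) * d = (C / K * d) / \<eta> 1" by simp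
    also have "\<dots> \<le> B / \<eta> 1" using B(1) \<open>0 < \<eta> 1\<close> by (intro divide_right_mono) auto
    also have "\<dots> \<le> A" using BA \<open>0 < \<eta> 1\<close> by (simp add: pos_divide_le_eq mult.commute)
    finally have "C / (\<eta> 1 * K) * d \<le> A" .
    moreover have "A \<le> C * (\<eta> 1 * K) * d"
    proof -
      have "\<eta> 1 * B \<le> \<eta> 1 * (C * K * d)" using B(2) \<open>0 < \<eta> 1\<close> by simp
      then show ?thesis using AB by (simp add: ac_simps)
    qed
    ultimately show ?thesis by (simp add: A_def d_def)
  qed
qed

theorem lemma4p7:
  fixes r :: nat and n :: "nat \<Rightarrow> nat" and \<alpha> :: "nat \<Rightarrow> real"
    and \<eta> \<eta>inv :: "real \<Rightarrow> real"
    and F :: "pt \<Rightarrow> pt" and H :: "(nat \<Rightarrow> real) \<Rightarrow> pt \<Rightarrow> (nat \<Rightarrow> real)"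
    and G :: "pt \<Rightarrow> pt" and K C :: real
  assumes r2: "r \<ge> 2"
    and npos: "\<forall>i\<in>{1..r}. n i \<ge> 1"
    and alpha_pos: "0 < \<alpha> 1"
    and alpha_mono: "\<forall>i\<in>{1..r}. \<forall>j\<in>{1..r}. i < j \<longrightarrow> \<alpha> i < \<alpha> j"
    and eta: "homeomorphism {0..} {0..} \<eta> \<eta>inv"
    and Fhomeo: "metric_homeomorphism (Rn r n) (Dmet r n \<alpha>) F"
    and Fqs: "quasisymmetric (Rn r n) (Dmet r n \<alpha>) \<eta> F"
    and Fform: "\<forall>a\<in>R1 n. \<forall>y\<in>Yspace r n. F (combine a y) = combine (H a y) (G y)"
    and K: "K \<ge> 1" and C: "C > 0"
    and Gqs: "quasisimilarity (Yspace r n) (DY r n \<alpha>) K C G"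
    and Hqs: "\<forall>y\<in>Yspace r n. quasisimilarity (R1 n) (eucl1 n) K C (\<lambda>a. H a y)"
  shows "quasisimilarity (Rn r n) (Dmet r n \<alpha>) (\<eta> 1 / \<eta>inv 1 * K) C F"
proof -
  have n1: "1 \<le> n 1" using npos r2 by auto
  have bij: "bij_betw F (Rn r n) (Rn r n)"
    using Fhomeo by (simp add: metric_homeomorphism_def)
  have eta1: "1 \<le> \<eta> 1"
    by (rule quasisymmetric_Dmet_eta_one_ge_one[OF r2 alpha_pos n1 bij Fqs])
  have qsim: "quasisimilarity (Rn r n) (Dmet r n \<alpha>) (\<eta> 1 * K) C F"
    using quasisimilarity_Dmet_of_horizontal[OF r2 alpha_pos n1 bij Fqs Fform Hqs] eta1 K by simp
  have le: "\<eta> 1 * K \<le> \<eta> 1 / \<eta>inv 1 * K"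
    using homeomorphism_inv_one_bounds[OF eta eta1] eta1 K
    by (intro mult_right_mono) (auto simp: le_divide_eq)
  have "\<forall>a\<in>Rn r n. \<forall>b\<in>Rn r n. 0 \<le> Dmet r n \<alpha> a b"
    using Dmet_nonneg r2 by simp
  then show ?thesis
    using quasisimilarity_mono[OF qsim _ le] eta1 K C by simp
qed

end
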